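(* Let $d=2$, $\theta\in\mathcal{S}_e^{\rm sep}$, and for $k\in\mathbb{R}$ let $$\Psi_\pm(k):=\int_{|x_2|<|k|}\mathcal{F}^{-1}\theta\big(\pm(|k|-|x_2|),x_2\big)dx_2.$$ Then $$\Psi_+(k)+\Psi_-(k)=\frac{1}{2\pi^2}\int_{\mathbb{R}}dw_1\sin(w_1|k|)\,\mathrm{PV}\!\!\int\Big(\frac{dw_2}{w_2+w_1}-\frac{dw_2}{w_2-w_1}\Big)\theta(w_1,w_2)+\frac{1}{2\pi^2}\int_{\mathbb{R}}dw_2\sin(w_2|k|)\,\mathrm{PV}\!\!\int\Big(\frac{dw_1}{w_1+w_2}-\frac{dw_1}{w_1-w_2}\Big)\theta(w_1,w_2).$$
   Context: Inverse Fourier transform on $\mathbb{R}^2$: $\mathcal{F}^{-1}\theta(\mathbf{x})=(2\pi)^{-2}\int_{\mathbb{R}^2}\theta(\mathbf{w})e^{i\mathbf{x}\cdot\mathbf{w}}d\mathbf{w}$. $\mathcal{S}_e^{\rm sep}$ is the linear span of functions $\varphi(\mathbf{w})+\varphi(-\mathbf{w})$ with $\varphi(\mathbf{w})=\varphi_1(w_1)\varphi_2(w_2)$, $\varphi_i\in\mathcal{S}(\mathbb{R})$ (Schwartz space). $\mathrm{PV}\!\int(\frac{dw_2}{w_2+w_1}-\frac{dw_2}{w_2-w_1})\theta:=\mathrm{PV}\!\int\frac{\theta(w_1,w_2)}{w_2+w_1}dw_2-\mathrm{PV}\!\int\frac{\theta(w_1,w_2)}{w_2-w_1}dw_2$, where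 $\mathrm{PV}\!\int\frac{g(w)}{w-c}dw=\lim_{\epsilon\to0+}\int_{|w-c|>\epsilon}\frac{g(w)}{w-c}dw$. *)

theory Defs
  imports "HOL-Analysis.Analysis"
begin

definition schwartz_real :: "(real \<Rightarrow> real) \<Rightarrow> bool" where
  "schwartz_real g \<longleftrightarrow>
     (\<forall>n x. ((deriv ^^ n) g) differentiable (at x)) \<and>
     (\<forall>m n. bounded (range (\<lambda>x. x ^ m * (deriv ^^ n) g x)))"

definition schwartz :: "(real \<Rightarrow> complex) \<Rightarrow> bool" where
  "schwartz f \<longleftrightarrow> schwartz_real (\<lambda>x. Re (f x)) \<and> schwartz_real (\<lambda>x. Im (f x))"

definition sep_even_schwartz :: "(real \<times> real \<Rightarrow> complex) set" where
  "sep_even_schwartz = {\<theta>. \<exists>(n::nat) (c::nat \<Rightarrow> complex) \<phi>1 \<phi>2.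
      (\<forall>i<n. schwartz (\<phi>1 i) \<and> schwartz (\<phi>2 i)) \<and>
      (\<forall>w1 w2. \<theta> (w1, w2) =
         (\<Sum>i<n. c i * (\<phi>1 i w1 * \<phi>2 i w2 + \<phi>1 i (-w1) * \<phi>2 i (-w2))))}"

definition inv_fourier2 :: "(real \<times> real \<Rightarrow> complex) \<Rightarrow> real \<times> real \<Rightarrow> complex" where
  "inv_fourier2 \<theta> x = (1 / (2 * pi) ^ 2) *
      (LINT w|lborel. \<theta> w * exp (\<i> * complex_of_real (x \<bullet> w)))"

definition PV :: "(real \<Rightarrow> complex) \<Rightarrow> real \<Rightarrow> complex" where
  "PV g c = Lim (at_right 0)
      (\<lambda>\<epsilon>. LINT w : {w. \<epsilon> < \<bar>w - c\<bar>} | lborel. g w / complex_of_real (w - c))"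

text \<open>Psi_s(k) for sign s = 1 (Psi_+) or s = -1 (Psi_-).\<close>
definition Psi :: "(real \<times> real \<Rightarrow> complex) \<Rightarrow> real \<Rightarrow> real \<Rightarrow> complex" where
  "Psi \<theta> s k = (LINT x2 : {x2. \<bar>x2\<bar> < \<bar>k\<bar>} | lborel.
      inv_fourier2 \<theta> (s * (\<bar>k\<bar> - \<bar>x2\<bar>), x2))"

end

theory Submission
  imports Defs
begin

text \<open>Fubini turns \<open>Psi_+(k) + Psi_-(k)\<close> into \<open>1/(2 pi^2)\<close> times the integral of \<open>\<theta>\<close>
  against the kernel \<open>(sin Kw1 - sin Kw2)/(w1 - w2) + (sin Kw1 + sin Kw2)/(w1 + w2)\<close>, \<open>K = |k|\<close>,
  which is what the plane waves \<open>e^{i x.w}\<close> integrate to along the square \<open>|x1| + |x2| = K\<close>.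
  The right-hand side is the same expression read through partial fractions: truncating the
  singular denominators at distance \<open>\<epsilon>\<close>, the two iterated truncated principal values add up
  exactly to the integral of \<open>\<theta>\<close> against the correspondingly truncated kernel. As \<open>\<epsilon> \<rightarrow> 0\<close> the
  truncated kernel stays bounded by \<open>2K\<close>, and for separable \<open>\<theta>\<close> with integrable Lipschitz
  factors the truncated principal values stay uniformly bounded, so dominated convergence applies
  on both sides.\<close>

section \<open>Integrable Lipschitz functions\<close>

(* Schwartz functions enter the argument only through these two properties. *)
definition decaying_lipschitz :: "(real \<Rightarrow> complex) \<Rightarrow> bool" where
  "decaying_lipschitz f \<longleftrightarrow> (\<exists>C. \<forall>x. norm (f x) \<le> C / (1 + x\<^sup>2)) \<and> (\<exists>M. M-lipschitz_on UNIV f)"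

lemma integrable_inverse_1_plus_square: "integrable lborel (\<lambda>x::real. 1 / (1 + x\<^sup>2))"
proof -
  have "set_integrable lborel (einterval (-\<infinity>) \<infinity>) (\<lambda>x::real. inverse (1 + x\<^sup>2))"
  proof (rule interval_integral_FTC_nonneg(1)[where F=arctan and A="-(pi/2)" and B="pi/2"])
    show "((arctan \<circ> real_of_ereal) \<longlongrightarrow> - (pi / 2)) (at_right (- \<infinity>))"
      unfolding ereal_tendsto_simps by (rule tendsto_arctan_at_bot)
    show "((arctan \<circ> real_of_ereal) \<longlongrightarrow> (pi / 2)) (at_left \<infinity>)"
      unfolding ereal_tendsto_simps by (rule tendsto_arctan_at_top)
  qed (auto intro!: DERIV_arctan continuous_intros simp: add_pos_nonneg add_nonneg_eq_0_iff)
  then show ?thesis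
    by (simp add: set_integrable_def einterval_iff divide_inverse)
qed

lemma decaying_lipschitz_continuous: "decaying_lipschitz f \<Longrightarrow> continuous_on UNIV f"
  unfolding decaying_lipschitz_def using lipschitz_on_continuous_on by blast

lemma decaying_lipschitz_measurable:
  "decaying_lipschitz f \<Longrightarrow> f \<in> borel_measurable borel"
  by (blast intro: borel_measurable_continuous_onI decaying_lipschitz_continuous)

lemma decaying_lipschitz_integrable: "decaying_lipschitz f \<Longrightarrow> integrable lborel f"
proof -
  assume f: "decaying_lipschitz f"
  then obtain C where C: "\<And>x. norm (f x) \<le> C / (1 + x\<^sup>2)" unfolding decaying_lipschitz_def by auto
  show ?thesis
  proof (rule Bochner_Integration.integrable_bound)
    show "integrable lborel (\<lambda>x. C * (1 / (1 + x\<^sup>2)))"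
      using integrable_mult_left[OF integrable_inverse_1_plus_square] by simp
    show "AE x in lborel. norm (f x) \<le> norm (C * (1 / (1 + x\<^sup>2)))"
      using C by (auto intro!: AE_I2 order_trans[OF C] divide_right_mono)
  qed (use f decaying_lipschitz_measurable in simp)
qed

lemma decaying_lipschitz_add:
  assumes "decaying_lipschitz f" "decaying_lipschitz g"
  shows "decaying_lipschitz (\<lambda>x. f x + g x)"
proof -
  obtain C1 M1 C2 M2 where C: "\<And>x. norm (f x) \<le> C1 / (1 + x\<^sup>2)" "\<And>x. norm (g x) \<le> C2 / (1 + x\<^sup>2)"
    and M: "M1-lipschitz_on UNIV f" "M2-lipschitz_on UNIV g"
    using assms unfolding decaying_lipschitz_def by auto
  have "norm (f x + g x) \<le> (C1 + C2) / (1 + x\<^sup>2)" for x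
    using norm_triangle_ineq[of "f x" "g x"] C[of x] by (simp add: add_divide_distrib)
  then show ?thesis
    unfolding decaying_lipschitz_def using lipschitz_on_add[OF M] by blast
qed

lemma decaying_lipschitz_cmult:
  assumes "decaying_lipschitz f"
  shows "decaying_lipschitz (\<lambda>x. c * f x)"
proof -
  obtain C M where C: "\<And>x. norm (f x) \<le> C / (1 + x\<^sup>2)" and M: "M-lipschitz_on UNIV f"
    using assms unfolding decaying_lipschitz_def by auto
  have "norm (c * f x) \<le> (norm c * C) / (1 + x\<^sup>2)" for x
    using mult_left_mono[OF C[of x], of "norm c"] by (simp add: norm_mult)
  moreover have "(norm c * M)-lipschitz_on UNIV (\<lambda>x. c * f x)"
  proof (rule lipschitz_onI)
    show "dist (c * f x) (c * f y) \<le> norm c * M * dist x y" for x y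
      using mult_left_mono[OF lipschitz_onD[OF M, of x y], of "norm c"]
      by (simp add: dist_norm norm_mult right_diff_distrib[symmetric] mult.assoc)
  qed (use lipschitz_on_nonneg[OF M] in simp)
  ultimately show ?thesis unfolding decaying_lipschitz_def by blast
qed

lemma decaying_lipschitz_sum:
  "finite I \<Longrightarrow> (\<And>i. i \<in> I \<Longrightarrow> decaying_lipschitz (f i)) \<Longrightarrow>
    decaying_lipschitz (\<lambda>x. \<Sum>i\<in>I. f i x)"
proof (induction I rule: finite_induct)
  case empty
  have "0-lipschitz_on UNIV (\<lambda>x::real. 0::complex)" by (rule lipschitz_on_constant)
  then show ?case unfolding decaying_lipschitz_def by (auto intro!: exI[of _ 0])
qed (auto intro: decaying_lipschitz_add)

lemma decaying_lipschitz_reflect: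
  assumes "decaying_lipschitz f"
  shows "decaying_lipschitz (\<lambda>x. f (- x))"
proof -
  obtain C M where C: "\<And>x. norm (f x) \<le> C / (1 + x\<^sup>2)" and M: "M-lipschitz_on UNIV f"
    using assms unfolding decaying_lipschitz_def by auto
  have "(M * 1)-lipschitz_on UNIV (\<lambda>x. f (- x))"
    by (rule lipschitz_on_compose2[OF lipschitz_on_minus[OF lipschitz_on_id]])
      (use M in \<open>simp add: surj_def\<close>)
  moreover have "norm (f (- x)) \<le> C / (1 + x\<^sup>2)" for x using C[of "- x"] by simp
  ultimately show ?thesis unfolding decaying_lipschitz_def by auto
qed

lemma schwartz_real_decaying_lipschitz:
  assumes "schwartz_real g"
  obtains C M where "\<And>x. \<bar>g x\<bar> \<le> C / (1 + x\<^sup>2)" and "M-lipschitz_on UNIV g"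
proof -
  have diff: "\<And>x. g differentiable (at x)"
    and bnd: "\<And>m n. bounded (range (\<lambda>x. x ^ m * (deriv ^^ n) g x))"
    using assms unfolding schwartz_real_def by (metis funpow_0)+
  obtain B0 where B0: "\<And>x. \<bar>g x\<bar> \<le> B0" using bnd[of 0 0] unfolding bounded_iff by auto
  obtain B2 where B2: "\<And>x. \<bar>x\<^sup>2 * g x\<bar> \<le> B2" using bnd[of 2 0] unfolding bounded_iff by auto
  obtain B1 where B1: "\<And>x. \<bar>deriv g x\<bar> \<le> B1" using bnd[of 0 1] unfolding bounded_iff by auto
  have "\<bar>g x\<bar> \<le> (B0 + B2) / (1 + x\<^sup>2)" for x
  proof -
    have "(1 + x\<^sup>2) * \<bar>g x\<bar> = \<bar>g x\<bar> + \<bar>x\<^sup>2 * g x\<bar>" by (simp add: algebra_simps abs_mult)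
    also have "\<dots> \<le> B0 + B2" using B0[of x] B2[of x] by simp
    finally show ?thesis by (simp add: pos_le_divide_eq mult.commute add_pos_nonneg)
  qed
  moreover have "B1-lipschitz_on UNIV g"
  proof (rule bounded_derivative_imp_lipschitz)
    show "(g has_derivative (\<lambda>h. h * deriv g x)) (at x within UNIV)" for x
      using diff[of x] by (simp add: DERIV_deriv_iff_real_differentiable[symmetric] has_field_derivative_def mult_commute_abs)
    show "onorm (\<lambda>h. h * deriv g x) \<le> B1" for x
      using B1[of x] by (intro onorm_le) (simp add: abs_mult mult.commute[of B1] mult_left_mono)
  qed (use B1[of 0] in auto)
  ultimately show ?thesis using that by blast
qed

lemma schwartz_decaying_lipschitz:
  assumes "schwartz f"
  shows "decaying_lipschitz f"
proof -
  obtain C1 M1 where C1: "\<And>x. \<bar>Re (f x)\<bar> \<le> C1 / (1 + x\<^sup>2)"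
    and M1: "M1-lipschitz_on UNIV (\<lambda>x. Re (f x))"
    using assms unfolding schwartz_def by (metis schwartz_real_decaying_lipschitz)
  obtain C2 M2 where C2: "\<And>x. \<bar>Im (f x)\<bar> \<le> C2 / (1 + x\<^sup>2)"
    and M2: "M2-lipschitz_on UNIV (\<lambda>x. Im (f x))"
    using assms unfolding schwartz_def by (metis schwartz_real_decaying_lipschitz)
  have "norm (f x) \<le> (C1 + C2) / (1 + x\<^sup>2)" for x
    using cmod_le[of "f x"] C1[of x] C2[of x] by (simp add: add_divide_distrib)
  moreover have "(M1 + M2)-lipschitz_on UNIV f"
  proof (rule lipschitz_onI)
    show "dist (f x) (f y) \<le> (M1 + M2) * dist x y" for x y
      using cmod_le[of "f x - f y"] lipschitz_onD[OF M1, of x y] lipschitz_onD[OF M2, of x y]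
      by (simp add: dist_norm dist_real_def algebra_simps)
  qed (use lipschitz_on_nonneg[OF M1] lipschitz_on_nonneg[OF M2] in simp)
  ultimately show ?thesis unfolding decaying_lipschitz_def by blast
qed

section \<open>Truncated principal values\<close>

definition pv_truncated :: "(real \<Rightarrow> complex) \<Rightarrow> real \<Rightarrow> real \<Rightarrow> complex" where
  "pv_truncated g e c = (LINT w : {w. e < \<bar>w - c\<bar>} | lborel. g w / complex_of_real (w - c))"

lemma set_integrable_pv_truncated:
  assumes g: "integrable lborel g" and e: "0 < e"
  shows "set_integrable lborel {w. e < \<bar>w - c\<bar>} (\<lambda>w. g w / complex_of_real (w - c))"
  unfolding set_integrable_def
proof (rule Bochner_Integration.integrable_bound)
  show "integrable lborel (\<lambda>w. (1 / e) *\<^sub>R g w)" using g by simp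
  show "(\<lambda>w. indicat_real {w. e < \<bar>w - c\<bar>} w *\<^sub>R (g w / complex_of_real (w - c))) \<in> borel_measurable lborel"
    using g by measurable
  show "AE w in lborel. norm (indicat_real {w. e < \<bar>w - c\<bar>} w *\<^sub>R (g w / complex_of_real (w - c)))
      \<le> norm ((1 / e) *\<^sub>R g w)"
  proof (rule AE_I2)
    fix w
    show "norm (indicat_real {w. e < \<bar>w - c\<bar>} w *\<^sub>R (g w / complex_of_real (w - c))) \<le> norm ((1 / e) *\<^sub>R g w)"
    proof (cases "e < \<bar>w - c\<bar>")
      case True
      then have "norm (g w / complex_of_real (w - c)) = norm (g w) / \<bar>w - c\<bar>"
        by (simp add: norm_divide del: of_real_diff)
      also have "\<dots> \<le> norm (g w) / e" using True e by (intro divide_left_mono) auto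
      finally show ?thesis using True e by (simp add: divide_inverse mult.commute)
    qed auto
  qed
qed

lemma pv_truncated_sum:
  assumes I: "finite I" and b: "\<And>i. i \<in> I \<Longrightarrow> integrable lborel (b i)" and e: "0 < e"
  shows "pv_truncated (\<lambda>y. \<Sum>i\<in>I. a i * b i y) e c = (\<Sum>i\<in>I. a i * pv_truncated (b i) e c)"
proof -
  let ?T = "\<lambda>i w. indicat_real {w. e < \<bar>w - c\<bar>} w *\<^sub>R (b i w / complex_of_real (w - c))"
  have "pv_truncated (\<lambda>y. \<Sum>i\<in>I. a i * b i y) e c = (LINT w|lborel. (\<Sum>i\<in>I. a i * ?T i w))"
    unfolding pv_truncated_def set_lebesgue_integral_def
    by (rule Bochner_Integration.integral_cong) (auto simp: indicator_def sum_divide_distrib sum_distrib_left)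
  also have "\<dots> = (\<Sum>i\<in>I. (LINT w|lborel. a i * ?T i w))"
    using set_integrable_pv_truncated[OF b e] unfolding set_integrable_def
    by (intro Bochner_Integration.integral_sum integrable_mult_right) auto
  also have "\<dots> = (\<Sum>i\<in>I. a i * pv_truncated (b i) e c)"
    unfolding pv_truncated_def set_lebesgue_integral_def by (simp only: integral_mult_right_zero)
  finally show ?thesis .
qed

text \<open>Subtracting \<open>g c\<close> on \<open>|t| < 1\<close> removes the singularity at \<open>t = 0\<close> without changing
  any symmetric truncation, because \<open>1/t\<close> is odd.\<close>

definition pv_integrand :: "(real \<Rightarrow> complex) \<Rightarrow> real \<Rightarrow> real \<Rightarrow> complex" where
  "pv_integrand g c t = (g (c + t) - (if \<bar>t\<bar> < 1 then g c else 0)) / complex_of_real t"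

lemma pv_integrand_measurable [measurable]:
  assumes [measurable]: "g \<in> borel_measurable borel"
  shows "pv_integrand g c \<in> borel_measurable borel"
  unfolding pv_integrand_def by measurable

lemma pv_integrand_bound:
  assumes M: "M-lipschitz_on UNIV g"
  shows "norm (pv_integrand g c t) \<le> M * indicator {-1..1} t + norm (g (c + t))"
proof (cases "\<bar>t\<bar> < 1")
  case True
  have "norm (pv_integrand g c t) = norm (g (c + t) - g c) / \<bar>t\<bar>"
    using True by (simp add: pv_integrand_def norm_divide)
  also have "\<dots> \<le> M"
    using lipschitz_on_normD[OF M, of "c + t" c] lipschitz_on_nonneg[OF M]
    by (cases "t = 0") (auto simp: divide_le_eq)
  finally have "norm (pv_integrand g c t) \<le> M" .
  moreover have "indicator {-1..1} t = (1::real)" using True by (auto simp: indicator_def abs_less_iff)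
  ultimately show ?thesis by (simp add: add_increasing2)
next
  case False
  have "norm (pv_integrand g c t) = norm (g (c + t)) / \<bar>t\<bar>"
    using False by (simp add: pv_integrand_def norm_divide)
  also have "\<dots> \<le> norm (g (c + t))" using False by (simp add: divide_le_eq mult_le_cancel_left1)
  moreover have "0 \<le> M * indicator {-1..1} t" using lipschitz_on_nonneg[OF M] by simp
  ultimately show ?thesis by (simp add: add_increasing)
qed

lemma integrable_pv_majorant:
  fixes g :: "real \<Rightarrow> complex"
  assumes g: "integrable lborel g"
  shows "integrable lborel (\<lambda>t. M * indicator {-1..1::real} t + norm (g (c + t)))"
proof -
  have "integrable lborel (\<lambda>t. g (c + t))"
    using lborel_integrable_real_affine[OF g, of 1 c] by simp
  then show ?thesis by (intro Bochner_Integration.integrable_add integrable_mult_right integrable_norm) auto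
qed

lemma integral_pv_majorant:
  fixes g :: "real \<Rightarrow> complex"
  assumes g: "integrable lborel g"
  shows "(LINT t|lborel. M * indicator {-1..1::real} t + norm (g (c + t))) = 2 * M + (LINT t|lborel. norm (g t))"
proof -
  have "integrable lborel (\<lambda>t. norm (g (c + t)))"
    using lborel_integrable_real_affine[OF g, of 1 c] by simp
  moreover have "(LINT t|lborel. norm (g (c + t))) = (LINT t|lborel. norm (g t))"
    using lborel_integral_real_affine[of 1 "\<lambda>t. norm (g t)" c] by simp
  ultimately show ?thesis by simp
qed

lemma integrable_pv_integrand:
  assumes g: "integrable lborel g" and M: "M-lipschitz_on UNIV g" and S: "S \<in> sets borel"
  shows "integrable lborel (\<lambda>t. indicator S t *\<^sub>R pv_integrand g c t)"
proof (rule Bochner_Integration.integrable_bound[OF integrable_pv_majorant[OF g, of M c]])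
  show "(\<lambda>t. indicat_real S t *\<^sub>R pv_integrand g c t) \<in> borel_measurable lborel" using g S by measurable
  show "AE t in lborel. norm (indicat_real S t *\<^sub>R pv_integrand g c t) \<le> norm (M * indicator {-1..1} t + norm (g (c + t)))"
    using pv_integrand_bound[OF M, of c] order_trans[OF _ pv_integrand_bound[OF M, of c]]
    by (auto intro!: AE_I2 simp: indicator_def)
qed

lemma pv_truncated_eq_integral_pv_integrand:
  assumes g: "integrable lborel g" and e: "0 < e"
  shows "pv_truncated g e c = (LINT t|lborel. indicator {t. e < \<bar>t\<bar>} t *\<^sub>R pv_integrand g c t)"
proof -
  let ?h = "\<lambda>t. indicator {t. e < \<bar>t\<bar>} t *\<^sub>R ((if \<bar>t\<bar> < 1 then g c else 0) / complex_of_real t)"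
  let ?f = "\<lambda>t. indicator {t. e < \<bar>t\<bar>} t *\<^sub>R (g (c + t) / complex_of_real t)"
  let ?F = "\<lambda>w. indicat_real {w. e < \<bar>w - c\<bar>} w *\<^sub>R (g w / complex_of_real (w - c))"
  have shift: "?F (c + 1 * t) = ?f t" for t by (simp add: indicator_def)
  have "integrable lborel (\<lambda>t. ?F (c + 1 * t))"
    using set_integrable_pv_truncated[OF g e, of c] unfolding set_integrable_def
    by (intro lborel_integrable_real_affine) auto
  then have f_int: "integrable lborel ?f" unfolding shift .
  have "pv_truncated g e c = (LINT t|lborel. ?f t)"
    unfolding pv_truncated_def set_lebesgue_integral_def
    using lborel_integral_real_affine[of 1 ?F c] unfolding shift by simp
  have h_int: "integrable lborel ?h"
  proof (rule Bochner_Integration.integrable_bound)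
    show "integrable lborel (\<lambda>t. (norm (g c) / e) * indicator {-1..1::real} t)"
      by (intro integrable_mult_right) (auto simp: emeasure_lborel_Icc_eq)
    show "AE t in lborel. norm (?h t) \<le> norm ((norm (g c) / e) * indicator {-1..1::real} t)"
    proof (rule AE_I2)
      fix t
      show "norm (?h t) \<le> norm ((norm (g c) / e) * indicator {-1..1::real} t)"
      proof (cases "e < \<bar>t\<bar> \<and> \<bar>t\<bar> < 1")
        case True
        then have "norm (?h t) = norm (g c) / \<bar>t\<bar>" by (simp add: norm_divide)
        also have "\<dots> \<le> norm (g c) / e" using True e by (intro divide_left_mono) auto
        finally show ?thesis using True e by (auto simp: indicator_def abs_less_iff)
      qed auto
    qed
  qed simp
  have h_odd: "(LINT t|lborel. ?h t) = 0"
  proof -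
    have "(LINT t|lborel. ?h t) = (LINT t|lborel. ?h (0 + (-1) * t))"
      using lborel_integral_real_affine[of "-1" ?h 0] by simp
    also have "\<dots> = (LINT t|lborel. - ?h t)"
      by (rule Bochner_Integration.integral_cong) (auto simp: indicator_def)
    also have "\<dots> = - (LINT t|lborel. ?h t)" by simp
    finally show ?thesis by simp
  qed
  have "(LINT t|lborel. indicator {t. e < \<bar>t\<bar>} t *\<^sub>R pv_integrand g c t) = (LINT t|lborel. ?f t - ?h t)"
    by (rule Bochner_Integration.integral_cong) (auto simp: pv_integrand_def indicator_def diff_divide_distrib)
  also have "\<dots> = (LINT t|lborel. ?f t)"
    using f_int h_int h_odd by simp
  finally show ?thesis using \<open>pv_truncated g e c = (LINT t|lborel. ?f t)\<close> by simp
qed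

lemma pv_truncated_bound:
  assumes g: "integrable lborel g" and M: "M-lipschitz_on UNIV g" and e: "0 < e"
  shows "norm (pv_truncated g e c) \<le> 2 * M + (LINT t|lborel. norm (g t))"
proof -
  have "norm (pv_truncated g e c) \<le> (LINT t|lborel. norm (indicator {t. e < \<bar>t\<bar>} t *\<^sub>R pv_integrand g c t))"
    unfolding pv_truncated_eq_integral_pv_integrand[OF g e] by (rule integral_norm_bound)
  also have "\<dots> \<le> (LINT t|lborel. M * indicator {-1..1::real} t + norm (g (c + t)))"
  proof (rule integral_mono)
    show "integrable lborel (\<lambda>t. norm (indicator {t. e < \<bar>t\<bar>} t *\<^sub>R pv_integrand g c t))"
      using integrable_pv_integrand[OF g M] by (intro integrable_norm) simp
    show "norm (indicator {t. e < \<bar>t\<bar>} t *\<^sub>R pv_integrand g c t) \<le> M * indicator {-1..1} t + norm (g (c + t))"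
      for t
      using pv_integrand_bound[OF M, of c t] lipschitz_on_nonneg[OF M] by (auto simp: indicator_def)
  qed (rule integrable_pv_majorant[OF g])
  finally show ?thesis unfolding integral_pv_majorant[OF g] .
qed

lemma tendsto_pv_truncated_PV:
  assumes g: "integrable lborel g" and M: "M-lipschitz_on UNIV g"
  shows "((\<lambda>e. pv_truncated g e c) \<longlongrightarrow> PV g c) (at_right 0)"
proof -
  let ?s = "\<lambda>r t. indicator {t. inverse r < \<bar>t\<bar>} t *\<^sub>R pv_integrand g c t"
  have "((\<lambda>r. integral\<^sup>L lborel (?s r)) \<longlongrightarrow> (LINT t|lborel. pv_integrand g c t)) at_top"
  proof (rule integral_dominated_convergence_at_top[OF _ _ integrable_pv_majorant[OF g, of M c]])
    show "AE t in lborel. ((\<lambda>r. ?s r t) \<longlongrightarrow> pv_integrand g c t) at_top"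
    proof (rule AE_I2)
      fix t :: real
      show "((\<lambda>r. ?s r t) \<longlongrightarrow> pv_integrand g c t) at_top"
      proof (cases "t = 0")
        case False
        have "\<forall>\<^sub>F r in at_top. inverse r < \<bar>t\<bar>"
          using False by (intro order_tendstoD(2)[OF tendsto_inverse_0_at_top[OF filterlim_ident]]) simp
        then have "\<forall>\<^sub>F r in at_top. ?s r t = pv_integrand g c t"
          by eventually_elim simp
        then show ?thesis by (rule tendsto_eventually)
      qed (simp add: pv_integrand_def)
    qed
    show "\<forall>\<^sub>F r in at_top. AE t in lborel. norm (?s r t) \<le> M * indicator {-1..1} t + norm (g (c + t))"
      using order_trans[OF _ pv_integrand_bound[OF M]] lipschitz_on_nonneg[OF M]
      by (auto intro!: always_eventually AE_I2 simp: indicator_def)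
  qed (use g in simp_all)
  then have "((\<lambda>e. integral\<^sup>L lborel (?s (inverse e))) \<longlongrightarrow> (LINT t|lborel. pv_integrand g c t)) (at_right 0)"
    by (rule filterlim_compose[OF _ filterlim_inverse_at_top_right])
  moreover have "\<forall>\<^sub>F e in at_right 0. integral\<^sup>L lborel (?s (inverse e)) = pv_truncated g e c"
    using eventually_at_right_less by eventually_elim (simp add: pv_truncated_eq_integral_pv_integrand[OF g])
  ultimately have lim: "((\<lambda>e. pv_truncated g e c) \<longlongrightarrow> (LINT t|lborel. pv_integrand g c t)) (at_right 0)"
    by (rule Lim_transform_eventually)
  then have "PV g c = (LINT t|lborel. pv_integrand g c t)"
    unfolding PV_def pv_truncated_def[symmetric] by (intro tendsto_Lim) auto
  with lim show ?thesis by simp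
qed

section \<open>Separable functions on the plane\<close>

lemma integrable_pair_measure_product:
  fixes f :: "'a::euclidean_space \<Rightarrow> real" and g :: "'b::euclidean_space \<Rightarrow> real"
  assumes f: "integrable lborel f" and g: "integrable lborel g"
  shows "integrable (lborel \<Otimes>\<^sub>M lborel) (\<lambda>z. f (fst z) * g (snd z))"
proof -
  have [measurable]: "f \<in> borel_measurable lborel" "g \<in> borel_measurable lborel" using f g by auto
  have "(\<integral>\<^sup>+z. ennreal (norm (f (fst z) * g (snd z))) \<partial>(lborel \<Otimes>\<^sub>M lborel)) =
        (\<integral>\<^sup>+x. \<integral>\<^sup>+y. ennreal (norm (f x)) * ennreal (norm (g y)) \<partial>lborel \<partial>lborel)"
    using lborel.nn_integral_fst[of "\<lambda>z. ennreal (norm (f (fst z))) * ennreal (norm (g (snd z)))"]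
    by (simp add: abs_mult ennreal_mult)
  also have "\<dots> = (\<integral>\<^sup>+x. ennreal (norm (f x)) \<partial>lborel) * (\<integral>\<^sup>+y. ennreal (norm (g y)) \<partial>lborel)"
    by (simp add: nn_integral_cmult nn_integral_multc)
  also have "\<dots> < \<infinity>"
    using f g unfolding integrable_iff_bounded by (simp add: ennreal_mult_less_top)
  finally show ?thesis unfolding integrable_iff_bounded by auto
qed

lemma integrable_pair_measure_product_complex:
  fixes f g :: "real \<Rightarrow> complex"
  assumes f: "integrable lborel f" and g: "integrable lborel g"
  shows "integrable (lborel \<Otimes>\<^sub>M lborel) (\<lambda>z. f (fst z) * g (snd z))"
proof (rule Bochner_Integration.integrable_bound)
  show "integrable (lborel \<Otimes>\<^sub>M lborel) (\<lambda>z. norm (f (fst z)) * norm (g (snd z)))"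
    using f g by (intro integrable_pair_measure_product) auto
  have [measurable]: "f \<in> borel_measurable lborel" "g \<in> borel_measurable lborel" using f g by auto
  show "(\<lambda>z. f (fst z) * g (snd z)) \<in> borel_measurable (lborel \<Otimes>\<^sub>M lborel)" by measurable
qed (auto simp: norm_mult)

definition separable_expansion ::
    "'i set \<Rightarrow> ('i \<Rightarrow> real \<Rightarrow> complex) \<Rightarrow> ('i \<Rightarrow> real \<Rightarrow> complex) \<Rightarrow> (real \<times> real \<Rightarrow> complex) \<Rightarrow> bool" where
  "separable_expansion I a b \<theta> \<longleftrightarrow> finite I \<and>
     (\<forall>i\<in>I. decaying_lipschitz (a i) \<and> decaying_lipschitz (b i)) \<and>
     (\<forall>x y. \<theta> (x, y) = (\<Sum>i\<in>I. a i x * b i y))"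

lemma separable_expansion_swap:
  "separable_expansion I a b \<theta> \<Longrightarrow> separable_expansion I b a (\<lambda>(x, y). \<theta> (y, x))"
  unfolding separable_expansion_def by (auto simp: mult.commute)

lemma separable_expansion_eq:
  "separable_expansion I a b \<theta> \<Longrightarrow> \<theta> = (\<lambda>z. \<Sum>i\<in>I. a i (fst z) * b i (snd z))"
  unfolding separable_expansion_def by auto

lemma separable_expansion_integrable:
  assumes s: "separable_expansion I a b \<theta>"
  shows "integrable lborel \<theta>"
proof -
  have "integrable (lborel \<Otimes>\<^sub>M lborel) (\<lambda>z. \<Sum>i\<in>I. a i (fst z) * b i (snd z))"
    using s unfolding separable_expansion_def
    by (intro Bochner_Integration.integrable_sum)
      (auto intro!: integrable_pair_measure_product_complex decaying_lipschitz_integrable)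
  then show ?thesis unfolding separable_expansion_eq[OF s] lborel_prod .
qed

lemma separable_expansion_slice:
  "separable_expansion I a b \<theta> \<Longrightarrow> decaying_lipschitz (\<lambda>y. \<theta> (x, y))"
  unfolding separable_expansion_def by (auto intro!: decaying_lipschitz_sum decaying_lipschitz_cmult)

lemma sep_even_schwartz_separable_expansion:
  assumes "\<theta> \<in> sep_even_schwartz"
  obtains a b :: "nat \<times> bool \<Rightarrow> real \<Rightarrow> complex" and I where "separable_expansion I a b \<theta>"
proof -
  obtain n :: nat and c \<phi>1 \<phi>2 where sch: "\<And>i. i < n \<Longrightarrow> schwartz (\<phi>1 i) \<and> schwartz (\<phi>2 i)"
    and \<theta>: "\<And>w1 w2. \<theta> (w1, w2) = (\<Sum>i<n. c i * (\<phi>1 i w1 * \<phi>2 i w2 + \<phi>1 i (-w1) * \<phi>2 i (-w2)))"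
    using assms unfolding sep_even_schwartz_def by blast
  define a where "a = (\<lambda>(i, t) x. c i * (if t then \<phi>1 i x else \<phi>1 i (-x)))"
  define b where "b = (\<lambda>(i, t) y. if t then \<phi>2 i y else \<phi>2 i (-y))"
  have "decaying_lipschitz (a it) \<and> decaying_lipschitz (b it)" if mem: "it \<in> {..<n} \<times> UNIV" for it
  proof -
    obtain i t where it: "it = (i, t)" "i < n" using mem by (cases it) auto
    then have "decaying_lipschitz (\<phi>1 i)" "decaying_lipschitz (\<phi>2 i)"
      using sch schwartz_decaying_lipschitz by auto
    then show ?thesis
      unfolding it a_def b_def by (cases t) (auto intro!: decaying_lipschitz_cmult decaying_lipschitz_reflect)
  qed
  moreover have "\<theta> (x, y) = (\<Sum>it\<in>{..<n} \<times> UNIV. a it x * b it y)" for x y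
  proof -
    have "(\<Sum>it\<in>{..<n} \<times> UNIV. a it x * b it y) = (\<Sum>i<n. \<Sum>t\<in>UNIV. a (i, t) x * b (i, t) y)"
      by (simp add: sum.cartesian_product case_prod_unfold)
    also have "\<dots> = (\<Sum>i<n. c i * (\<phi>1 i x * \<phi>2 i y + \<phi>1 i (-x) * \<phi>2 i (-y)))"
      by (simp add: UNIV_bool a_def b_def algebra_simps)
    finally show ?thesis unfolding \<theta> ..
  qed
  ultimately have "separable_expansion ({..<n} \<times> UNIV) a b \<theta>"
    unfolding separable_expansion_def by auto
  then show ?thesis by (rule that)
qed

section \<open>The kernel of \<open>Psi_+ + Psi_-\<close>\<close>

(* On the lines w1 = w2 and w1 = -w2 the quotients are junk values (x / 0 = 0); these lines
   form a null set, see AE_off_diagonals. *)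
definition psi_kernel :: "real \<Rightarrow> real \<times> real \<Rightarrow> real" where
  "psi_kernel K w =
     (sin (K * fst w) - sin (K * snd w)) / (fst w - snd w) +
     (sin (K * fst w) + sin (K * snd w)) / (fst w + snd w)"

lemma psi_kernel_measurable [measurable]: "psi_kernel K \<in> borel_measurable borel"
  unfolding psi_kernel_def
  by (intro borel_measurable_add borel_measurable_divide borel_measurable_continuous_onI continuous_intros)

lemma interval_integral_cos_cos:
  assumes K: "0 < K" and "w1 \<noteq> w2" and "w1 \<noteq> - w2"
  shows "(LBINT x=ereal 0..ereal K. 4 * cos ((K - \<bar>x\<bar>) * w1) * cos (x * w2)) = 2 * psi_kernel K (w1, w2)"
proof -
  have s: "w1 + w2 \<noteq> 0" "w1 - w2 \<noteq> 0" using assms by auto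
  define F where "F x = 2 * (- (sin (K * w1 - x * (w1 + w2)) / (w1 + w2)) - sin (K * w1 - x * (w1 - w2)) / (w1 - w2))"
    for x
  have "(LBINT x=ereal 0..ereal K. 4 * cos ((K - \<bar>x\<bar>) * w1) * cos (x * w2)) = F K - F 0"
  proof (rule interval_integral_FTC_finite)
    fix x assume "min 0 K \<le> x" "x \<le> max 0 K"
    then have "\<bar>x\<bar> = x" using K by simp
    have d: "((\<lambda>x. sin (K * w1 - x * a) / a) has_real_derivative - cos (K * w1 - x * a)) (at x)"
      if "a \<noteq> 0" for a
      using that by (auto intro!: derivative_eq_intros)
    have "K * w1 - x * (w1 + w2) = (K - x) * w1 - x * w2" "K * w1 - x * (w1 - w2) = (K - x) * w1 + x * w2"
      by (simp_all add: algebra_simps)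
    then have "2 * (- (- cos (K * w1 - x * (w1 + w2))) - (- cos (K * w1 - x * (w1 - w2))))
        = 4 * cos ((K - \<bar>x\<bar>) * w1) * cos (x * w2)"
      unfolding \<open>\<bar>x\<bar> = x\<close> by (simp add: cos_add cos_diff)
    moreover have "(F has_real_derivative
        2 * (- (- cos (K * w1 - x * (w1 + w2))) - (- cos (K * w1 - x * (w1 - w2))))) (at x)"
      unfolding F_def by (intro DERIV_cmult DERIV_diff DERIV_minus d s)
    ultimately show "(F has_vector_derivative 4 * cos ((K - \<bar>x\<bar>) * w1) * cos (x * w2))
        (at x within {min 0 K..max 0 K})"
      by (simp add: has_real_derivative_iff_has_vector_derivative[symmetric] has_field_derivative_at_within)
  qed (intro continuous_intros)
  also have "F K - F 0 = 2 * psi_kernel K (w1, w2)"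
  proof -
    have "K * w1 - K * (w1 + w2) = - (K * w2)" "K * w1 - K * (w1 - w2) = K * w2"
      by (simp_all add: algebra_simps)
    then show ?thesis unfolding F_def psi_kernel_def by (simp add: diff_divide_distrib add_divide_distrib algebra_simps)
  qed
  finally show ?thesis .
qed

lemma integral_phase_pair:
  assumes K: "0 < K" and d: "w1 \<noteq> w2" "w1 \<noteq> - w2"
  shows "(LINT x:{x. \<bar>x\<bar> < K}|lborel.
      exp (\<i> * complex_of_real ((K - \<bar>x\<bar>) * w1 + x * w2)) +
      exp (\<i> * complex_of_real (- ((K - \<bar>x\<bar>) * w1) + x * w2))) = 2 * complex_of_real (psi_kernel K (w1, w2))"
    (is "(LINT x:_|lborel. ?\<phi> x) = _")
proof -
  have cont: "isCont ?\<phi> x" "isCont (\<lambda>x. ?\<phi> (- x)) x" for x by (intro continuous_intros)+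
  have "{x. \<bar>x\<bar> < K} = {real_of_ereal (ereal (-K)) <..< real_of_ereal (ereal K)}" by auto
  then have "(LINT x:{x. \<bar>x\<bar> < K}|lborel. ?\<phi> x) = (LBINT x=ereal (-K)..ereal K. ?\<phi> x)"
    using K by (simp add: interval_integral_Ioo)
  also have "\<dots> = (LBINT x=ereal (-K)..ereal 0. ?\<phi> x) + (LBINT x=ereal 0..ereal K. ?\<phi> x)"
  proof (rule interval_integral_sum[symmetric])
    have "min (ereal (-K)) (min (ereal 0) (ereal K)) = ereal (-K)"
      and "max (ereal (-K)) (max (ereal 0) (ereal K)) = ereal K"
      using K by (auto simp: min_def max_def)
    then show "interval_lebesgue_integrable lborel (min (ereal (-K)) (min (ereal 0) (ereal K)))
        (max (ereal (-K)) (max (ereal 0) (ereal K))) ?\<phi>"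
      by (simp only:) (intro interval_integrable_isCont cont)
  qed
  also have "(LBINT x=ereal (-K)..ereal 0. ?\<phi> x) = (LBINT x=ereal 0..ereal K. ?\<phi> (- x))"
    by (subst interval_integral_reflect) simp
  also have "\<dots> + (LBINT x=ereal 0..ereal K. ?\<phi> x) = (LBINT x=ereal 0..ereal K. ?\<phi> (- x) + ?\<phi> x)"
    by (intro interval_lebesgue_integral_add(2)[symmetric] interval_integrable_isCont cont)
  also have "\<dots> = (LBINT x=ereal 0..ereal K. complex_of_real (4 * cos ((K - \<bar>x\<bar>) * w1) * cos (x * w2)))"
  proof -
    have e: "exp (\<i> * complex_of_real t) = cis t" for t by (simp add: cis_conv_exp)
    have "?\<phi> (- x) + ?\<phi> x = complex_of_real (4 * cos ((K - \<bar>x\<bar>) * w1) * cos (x * w2))" for x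
      unfolding e by (simp add: complex_eq_iff cos_add sin_add cos_diff sin_diff algebra_simps)
    then show ?thesis by simp
  qed
  also have "\<dots> = complex_of_real (LBINT x=ereal 0..ereal K. 4 * cos ((K - \<bar>x\<bar>) * w1) * cos (x * w2))"
    by (rule interval_lebesgue_integral_of_real)
  also have "\<dots> = 2 * complex_of_real (psi_kernel K (w1, w2))"
    unfolding interval_integral_cos_cos[OF K d] by simp
  finally show ?thesis .
qed

lemma Psi_eq_iterated_integral:
  fixes \<theta> :: "real \<times> real \<Rightarrow> complex" and s k :: real
  assumes \<theta>: "integrable lborel \<theta>"
  defines "F \<equiv> \<lambda>w x2. indicator {x2. \<bar>x2\<bar> < \<bar>k\<bar>} x2 *\<^sub>R
      (\<theta> w * exp (\<i> * complex_of_real ((s * (\<bar>k\<bar> - \<bar>x2\<bar>), x2) \<bullet> w)))"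
  shows "Psi \<theta> s k = complex_of_real (1 / (2 * pi) ^ 2) * (LINT w|lborel. LINT x2|lborel. F w x2)"
    and "integrable lborel (\<lambda>w. LINT x2|lborel. F w x2)"
proof -
  have [measurable]: "\<theta> \<in> borel_measurable borel" using borel_measurable_integrable[OF \<theta>] by simp
  have S: "{x2::real. \<bar>x2\<bar> < \<bar>k\<bar>} = {-\<bar>k\<bar> <..< \<bar>k\<bar>}" by auto
  have Fi: "integrable (lborel \<Otimes>\<^sub>M lborel) (\<lambda>(x2, w). F w x2)"
  proof (rule Bochner_Integration.integrable_bound)
    show "integrable (lborel \<Otimes>\<^sub>M lborel) (\<lambda>z. indicator {x2::real. \<bar>x2\<bar> < \<bar>k\<bar>} (fst z) * norm (\<theta> (snd z)))"
      using \<theta> by (intro integrable_pair_measure_product) (auto simp: S)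
    show "(\<lambda>(x2, w). F w x2) \<in> borel_measurable (lborel \<Otimes>\<^sub>M lborel)"
      unfolding F_def by measurable
  qed (auto simp: F_def norm_mult indicator_def)
  have "Psi \<theta> s k = (LINT x2|lborel. complex_of_real (1 / (2 * pi) ^ 2) * (LINT w|lborel. F w x2))"
    unfolding Psi_def inv_fourier2_def set_lebesgue_integral_def F_def
    by (rule Bochner_Integration.integral_cong) (auto simp: indicator_def)
  also have "\<dots> = complex_of_real (1 / (2 * pi) ^ 2) * (LINT x2|lborel. LINT w|lborel. F w x2)"
    by (rule integral_mult_right_zero)
  also have "(LINT x2|lborel. LINT w|lborel. F w x2) = (LINT w|lborel. LINT x2|lborel. F w x2)"
    using lborel_pair.integral_fst'[OF Fi] lborel_pair.integral_snd[OF Fi] by simp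
  finally show "Psi \<theta> s k = complex_of_real (1 / (2 * pi) ^ 2) * (LINT w|lborel. LINT x2|lborel. F w x2)" .
  show "integrable lborel (\<lambda>w. LINT x2|lborel. F w x2)"
    using lborel_pair.integrable_snd[OF Fi] by simp
qed

lemma AE_off_diagonals: "AE w in lborel. fst w \<noteq> snd w \<and> fst w \<noteq> - (snd w :: real)"
proof -
  have "{w::real \<times> real. fst w \<noteq> snd w \<and> fst w \<noteq> - snd w} \<in> sets borel"
    by (intro borel_open open_Collect_conj open_Collect_neq continuous_intros)
  then have "{w \<in> space (lborel \<Otimes>\<^sub>M lborel). fst w \<noteq> snd w \<and> fst w \<noteq> - (snd w :: real)} \<in> sets (lborel \<Otimes>\<^sub>M lborel)"
    unfolding lborel_prod by simp
  moreover have "AE y in lborel. x \<noteq> y \<and> x \<noteq> - y" for x :: real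
    using AE_lborel_singleton[of x] AE_lborel_singleton[of "- x"] by eventually_elim auto
  ultimately have "AE w in lborel \<Otimes>\<^sub>M lborel. fst w \<noteq> snd w \<and> fst w \<noteq> - (snd w :: real)"
    by (intro lborel_pair.AE_pair_measure) (simp_all add: AE_I2)
  then show ?thesis unfolding lborel_prod .
qed

lemma integrable_indicator_exp:
  assumes [measurable]: "f \<in> borel_measurable borel"
  shows "integrable lborel (\<lambda>x. indicator {x::real. \<bar>x\<bar> < K} x *\<^sub>R exp (\<i> * complex_of_real (f x)))"
proof (rule Bochner_Integration.integrable_bound)
  show "integrable lborel (indicat_real {-K<..<K})"
    using emeasure_bounded_finite[of "{-K<..<K}"] by (intro integrable_real_indicator) auto
  show "AE x in lborel. norm (indicator {x::real. \<bar>x\<bar> < K} x *\<^sub>R exp (\<i> * complex_of_real (f x)))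
      \<le> norm (indicat_real {-K<..<K} x)"
    by (auto intro!: AE_I2 simp: indicator_def abs_less_iff)
qed measurable

lemma Psi_sum_eq_integral_psi_kernel:
  fixes \<theta> :: "real \<times> real \<Rightarrow> complex"
  assumes \<theta>: "integrable lborel \<theta>" and k: "k \<noteq> 0"
  shows "Psi \<theta> 1 k + Psi \<theta> (-1) k =
    complex_of_real (1 / (2 * pi ^ 2)) * (LINT w|lborel. \<theta> w * complex_of_real (psi_kernel \<bar>k\<bar> w))"
proof -
  define G where "G s w = (LINT x2|lborel. indicator {x2. \<bar>x2\<bar> < \<bar>k\<bar>} x2 *\<^sub>R
      (\<theta> w * exp (\<i> * complex_of_real ((s * (\<bar>k\<bar> - \<bar>x2\<bar>), x2) \<bullet> w))))" for s w
  have P: "Psi \<theta> s k = complex_of_real (1 / (2 * pi) ^ 2) * integral\<^sup>L lborel (G s)"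
    and I: "integrable lborel (G s)" for s
    using Psi_eq_iterated_integral[OF \<theta>, where s=s and k=k] unfolding G_def by auto
  have "AE w in lborel. G 1 w + G (-1) w = 2 * (\<theta> w * complex_of_real (psi_kernel \<bar>k\<bar> w))"
    using AE_off_diagonals
  proof eventually_elim
    case (elim w)
    obtain w1 w2 where w: "w = (w1, w2)" by force
    let ?E = "\<lambda>s x2. indicator {x2::real. \<bar>x2\<bar> < \<bar>k\<bar>} x2 *\<^sub>R
      exp (\<i> * complex_of_real (s * ((\<bar>k\<bar> - \<bar>x2\<bar>) * w1) + x2 * w2))"
    have G: "G s w = \<theta> w * (LINT x2|lborel. ?E s x2)" for s
      unfolding G_def w integral_mult_right_zero[symmetric]
      by (rule Bochner_Integration.integral_cong) (auto simp: indicator_def algebra_simps)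
    have "(LINT x2|lborel. ?E 1 x2) + (LINT x2|lborel. ?E (-1) x2) = (LINT x2|lborel. ?E 1 x2 + ?E (-1) x2)"
      by (intro Bochner_Integration.integral_add[symmetric] integrable_indicator_exp) measurable
    also have "\<dots> = (LINT x:{x. \<bar>x\<bar> < \<bar>k\<bar>}|lborel.
        exp (\<i> * complex_of_real ((\<bar>k\<bar> - \<bar>x\<bar>) * w1 + x * w2)) +
        exp (\<i> * complex_of_real (- ((\<bar>k\<bar> - \<bar>x\<bar>) * w1) + x * w2)))"
      unfolding set_lebesgue_integral_def
      by (rule Bochner_Integration.integral_cong) (auto simp: indicator_def)
    also have "\<dots> = 2 * complex_of_real (psi_kernel \<bar>k\<bar> (w1, w2))"
      using elim k w by (intro integral_phase_pair) auto
    finally have sum: "(LINT x2|lborel. ?E 1 x2) + (LINT x2|lborel. ?E (-1) x2) =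
      2 * complex_of_real (psi_kernel \<bar>k\<bar> w)" unfolding w .
    show ?case unfolding G distrib_left[symmetric] sum by simp
  qed
  then have "(LINT w|lborel. G 1 w + G (-1) w) = (LINT w|lborel. 2 * (\<theta> w * complex_of_real (psi_kernel \<bar>k\<bar> w)))"
    using I \<theta> by (intro integral_cong_AE) (auto simp: borel_measurable_integrable)
  moreover have "(LINT w|lborel. 2 * (\<theta> w * complex_of_real (psi_kernel \<bar>k\<bar> w))) =
      2 * (LINT w|lborel. \<theta> w * complex_of_real (psi_kernel \<bar>k\<bar> w))"
    by (rule integral_mult_right_zero)
  moreover have "Psi \<theta> 1 k + Psi \<theta> (-1) k =
      complex_of_real (1 / (2 * pi) ^ 2) * (LINT w|lborel. G 1 w + G (-1) w)"
    unfolding P Bochner_Integration.integral_add[OF I I] by (simp add: distrib_left)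
  ultimately show ?thesis by (simp add: power2_eq_square field_simps)
qed

section \<open>The right-hand side as a limit\<close>

definition psi_kernel_trunc :: "real \<Rightarrow> real \<Rightarrow> real \<times> real \<Rightarrow> real" where
  "psi_kernel_trunc K e w =
     (if e < \<bar>fst w - snd w\<bar> then (sin (K * fst w) - sin (K * snd w)) / (fst w - snd w) else 0) +
     (if e < \<bar>fst w + snd w\<bar> then (sin (K * fst w) + sin (K * snd w)) / (fst w + snd w) else 0)"

lemma psi_kernel_trunc_measurable [measurable]: "psi_kernel_trunc K e \<in> borel_measurable borel"
  unfolding psi_kernel_trunc_def borel_prod[symmetric] by measurable

lemma abs_sin_diff_le: "\<bar>sin a - sin b\<bar> \<le> \<bar>a - b :: real\<bar>"
proof -
  have "\<bar>sin a - sin b\<bar> = 2 * \<bar>sin ((a - b) / 2)\<bar> * \<bar>cos ((a + b) / 2)\<bar>"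
    by (simp only: sin_diff_sin abs_mult abs_numeral)
  also have "\<dots> \<le> 2 * \<bar>(a - b) / 2\<bar> * 1"
    by (intro mult_mono mult_left_mono abs_sin_x_le_abs_x abs_cos_le_one) auto
  finally show ?thesis by simp
qed

lemma abs_sin_difference_quotient_le:
  fixes K x y :: real
  assumes "0 \<le> K"
  shows "\<bar>(sin (K * x) - sin (K * y)) / (x - y)\<bar> \<le> K"
proof (cases "x = y")
  case False
  have "\<bar>K * x - K * y\<bar> = K * \<bar>x - y\<bar>"
    unfolding right_diff_distrib[symmetric] abs_mult using assms by simp
  then have "\<bar>sin (K * x) - sin (K * y)\<bar> \<le> K * \<bar>x - y\<bar>"
    using abs_sin_diff_le[of "K * x" "K * y"] by simp
  then show ?thesis using False by (simp add: abs_divide divide_le_eq)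
qed (use assms in simp)

lemma abs_psi_kernel_trunc_le:
  assumes "0 \<le> K"
  shows "\<bar>psi_kernel_trunc K e w\<bar> \<le> 2 * K"
proof -
  let ?P = "if e < \<bar>fst w - snd w\<bar> then (sin (K * fst w) - sin (K * snd w)) / (fst w - snd w) else 0"
  let ?Q = "if e < \<bar>fst w + snd w\<bar> then (sin (K * fst w) + sin (K * snd w)) / (fst w + snd w) else 0"
  have "\<bar>?P\<bar> \<le> K" "\<bar>?Q\<bar> \<le> K"
    using abs_sin_difference_quotient_le[OF assms, of "fst w" "snd w"]
      abs_sin_difference_quotient_le[OF assms, of "fst w" "- snd w"] assms by simp_all
  then show ?thesis
    using abs_triangle_ineq[of ?P ?Q] unfolding psi_kernel_trunc_def by linarith
qed

lemma tendsto_psi_kernel_trunc: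
  assumes "(e \<longlongrightarrow> 0) F"
  shows "((\<lambda>n. psi_kernel_trunc K (e n) w) \<longlongrightarrow> psi_kernel K w) F"
proof -
  have ev: "\<forall>\<^sub>F n in F. (if e n < \<bar>d\<bar> then q / d else 0) = q / d" for d q :: real
  proof (cases "d = 0")
    case False
    have "\<forall>\<^sub>F n in F. e n < \<bar>d\<bar>" using order_tendstoD(2)[OF assms, of "\<bar>d\<bar>"] False by simp
    then show ?thesis by eventually_elim simp
  qed simp
  have "\<forall>\<^sub>F n in F. psi_kernel_trunc K (e n) w = psi_kernel K w"
    using ev[of "fst w - snd w" "sin (K * fst w) - sin (K * snd w)"]
      ev[of "fst w + snd w" "sin (K * fst w) + sin (K * snd w)"]
    by eventually_elim (simp add: psi_kernel_trunc_def psi_kernel_def)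
  then show ?thesis by (rule tendsto_eventually)
qed

lemma tendsto_integral_psi_kernel_trunc:
  assumes \<theta>: "integrable lborel \<theta>" and K: "0 \<le> K" and e: "e \<longlonglongrightarrow> 0"
  shows "(\<lambda>n. LINT w|lborel. \<theta> w * complex_of_real (psi_kernel_trunc K (e n) w))
      \<longlonglongrightarrow> (LINT w|lborel. \<theta> w * complex_of_real (psi_kernel K w))"
proof (rule integral_dominated_convergence[where w="\<lambda>w. 2 * K * norm (\<theta> w)"])
  have [measurable]: "\<theta> \<in> borel_measurable borel" using borel_measurable_integrable[OF \<theta>] by simp
  show "(\<lambda>w. \<theta> w * complex_of_real (psi_kernel K w)) \<in> borel_measurable lborel"
    and "(\<lambda>w. \<theta> w * complex_of_real (psi_kernel_trunc K (e n) w)) \<in> borel_measurable lborel" for n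
    by measurable
  show "integrable lborel (\<lambda>w. 2 * K * norm (\<theta> w))"
    using \<theta> by (intro integrable_mult_right integrable_norm)
  show "AE w in lborel. (\<lambda>n. \<theta> w * complex_of_real (psi_kernel_trunc K (e n) w))
      \<longlonglongrightarrow> \<theta> w * complex_of_real (psi_kernel K w)"
    by (intro AE_I2 tendsto_intros tendsto_psi_kernel_trunc e)
  show "AE w in lborel. norm (\<theta> w * complex_of_real (psi_kernel_trunc K (e n) w)) \<le> 2 * K * norm (\<theta> w)" for n
    using abs_psi_kernel_trunc_le[OF K] by (intro AE_I2) (simp add: norm_mult mult.commute mult_left_mono)
qed

(* The truncated integrand of the first term on the right; the second term is the same with
   the coordinates swapped. *)
definition pv_difference_trunc :: "(real \<times> real \<Rightarrow> complex) \<Rightarrow> real \<Rightarrow> real \<Rightarrow> real \<times> real \<Rightarrow> complex" where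
  "pv_difference_trunc \<theta> K e w = complex_of_real (sin (fst w * K)) *
     ((if e < \<bar>snd w + fst w\<bar> then \<theta> w / complex_of_real (snd w + fst w) else 0) -
      (if e < \<bar>snd w - fst w\<bar> then \<theta> w / complex_of_real (snd w - fst w) else 0))"

lemma integrable_pv_difference_trunc:
  assumes \<theta>: "integrable lborel \<theta>" and e: "0 < e"
  shows "integrable lborel (pv_difference_trunc \<theta> K e)"
proof (rule Bochner_Integration.integrable_bound)
  show "integrable lborel (\<lambda>w. (2 / e) * norm (\<theta> w))"
    using \<theta> by (intro integrable_mult_right integrable_norm)
  have [measurable]: "\<theta> \<in> borel_measurable (borel \<Otimes>\<^sub>M borel)"
    using borel_measurable_integrable[OF \<theta>] by (simp add: borel_prod)
  show "pv_difference_trunc \<theta> K e \<in> borel_measurable lborel"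
    unfolding measurable_lborel2 pv_difference_trunc_def borel_prod[symmetric] by measurable
  show "AE w in lborel. norm (pv_difference_trunc \<theta> K e w) \<le> norm (2 / e * norm (\<theta> w))"
  proof (rule AE_I2)
    fix w :: "real \<times> real"
    have q: "norm (if e < \<bar>c\<bar> then \<theta> w / complex_of_real c else 0) \<le> norm (\<theta> w) / e" for c
    proof (cases "e < \<bar>c\<bar>")
      case True
      then have "norm (\<theta> w / complex_of_real c) = norm (\<theta> w) / \<bar>c\<bar>" by (simp add: norm_divide)
      also have "\<dots> \<le> norm (\<theta> w) / e" using True e by (intro divide_left_mono) auto
      finally show ?thesis using True by simp
    qed (use e in auto)
    have "norm (pv_difference_trunc \<theta> K e w) \<le> 1 * (norm (\<theta> w) / e + norm (\<theta> w) / e)"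
      unfolding pv_difference_trunc_def norm_mult
      by (intro mult_mono order_trans[OF norm_triangle_ineq4] add_mono q) auto
    then show "norm (pv_difference_trunc \<theta> K e w) \<le> norm (2 / e * norm (\<theta> w))" using e by simp
  qed
qed

lemma integral_pv_difference_trunc_slice:
  assumes \<theta>: "integrable lborel (\<lambda>y. \<theta> (x, y))" and e: "0 < e"
  shows "(LINT y|lborel. pv_difference_trunc \<theta> K e (x, y)) =
    complex_of_real (sin (x * K)) * (pv_truncated (\<lambda>y. \<theta> (x, y)) e (- x) - pv_truncated (\<lambda>y. \<theta> (x, y)) e x)"
proof -
  let ?T = "\<lambda>c y. indicat_real {w. e < \<bar>w - c\<bar>} y *\<^sub>R (\<theta> (x, y) / complex_of_real (y - c))"
  have T: "integrable lborel (?T c)" for c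
    using set_integrable_pv_truncated[OF \<theta> e, of c] unfolding set_integrable_def .
  have "(LINT y|lborel. pv_difference_trunc \<theta> K e (x, y)) =
      (LINT y|lborel. complex_of_real (sin (x * K)) * (?T (- x) y - ?T x y))"
    unfolding pv_difference_trunc_def
    by (rule Bochner_Integration.integral_cong) (auto simp: indicator_def)
  also have "\<dots> = complex_of_real (sin (x * K)) * ((LINT y|lborel. ?T (- x) y) - (LINT y|lborel. ?T x y))"
    by (simp only: integral_mult_right_zero Bochner_Integration.integral_diff[OF T T])
  finally show ?thesis unfolding pv_truncated_def set_lebesgue_integral_def .
qed

lemma pv_difference_trunc_add_swap:
  "pv_difference_trunc \<theta> K e (w1, w2) + pv_difference_trunc (\<lambda>(x, y). \<theta> (y, x)) K e (w2, w1) =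
    \<theta> (w1, w2) * complex_of_real (psi_kernel_trunc K e (w1, w2))"
proof -
  have abs: "\<bar>w2 - w1\<bar> = \<bar>w1 - w2\<bar>" "\<bar>w2 + w1\<bar> = \<bar>w1 + w2\<bar>" by simp_all
  have "complex_of_real (w2 - w1) = - complex_of_real (w1 - w2)"
    and "complex_of_real (w2 + w1) = complex_of_real (w1 + w2)"
    by simp_all
  then show ?thesis
    unfolding pv_difference_trunc_def psi_kernel_trunc_def fst_conv snd_conv case_prod_conv abs
    by (simp only: of_real_add of_real_divide of_real_diff of_real_mult mult.commute[of _ K] divide_inverse
        inverse_minus_eq if_distrib[of "\<lambda>x. x * _"] mult_zero_left) (simp add: algebra_simps)
qed

lemma integral_pv_difference_trunc_iterated:
  fixes K :: real
  assumes \<theta>: "integrable lborel \<theta>" and slices: "\<And>x. integrable lborel (\<lambda>y. \<theta> (x, y))" and e: "0 < e"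
  defines "f \<equiv> \<lambda>x. complex_of_real (sin (x * K)) *
    (pv_truncated (\<lambda>y. \<theta> (x, y)) e (- x) - pv_truncated (\<lambda>y. \<theta> (x, y)) e x)"
  shows "integral\<^sup>L lborel (pv_difference_trunc \<theta> K e) = integral\<^sup>L lborel f"
    and "integrable lborel f"
proof -
  have i: "integrable (lborel \<Otimes>\<^sub>M lborel) (pv_difference_trunc \<theta> K e)"
    unfolding lborel_prod by (rule integrable_pv_difference_trunc[OF \<theta> e])
  show "integral\<^sup>L lborel (pv_difference_trunc \<theta> K e) = integral\<^sup>L lborel f"
    using lborel_pair.integral_fst'[OF i]
    by (simp add: lborel_prod f_def integral_pv_difference_trunc_slice[OF slices e])
  show "integrable lborel f"
    using lborel_pair.integrable_fst'[OF i]
    by (simp add: f_def integral_pv_difference_trunc_slice[OF slices e])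
qed

lemma tendsto_integral_pv_difference_trunc:
  assumes s: "separable_expansion I a b \<theta>" and e: "\<And>n. 0 < e n" "e \<longlonglongrightarrow> 0"
  shows "(\<lambda>n. integral\<^sup>L lborel (pv_difference_trunc \<theta> K (e n))) \<longlonglongrightarrow>
    (LINT x|lborel. complex_of_real (sin (x * K)) * (PV (\<lambda>y. \<theta> (x, y)) (- x) - PV (\<lambda>y. \<theta> (x, y)) x))"
proof -
  define S where "S n x = complex_of_real (sin (x * K)) *
    (pv_truncated (\<lambda>y. \<theta> (x, y)) (e n) (- x) - pv_truncated (\<lambda>y. \<theta> (x, y)) (e n) x)" for n x
  have I: "finite I" and a: "\<And>i. i \<in> I \<Longrightarrow> integrable lborel (a i)"
    and b: "\<And>i. i \<in> I \<Longrightarrow> decaying_lipschitz (b i)"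
    and \<theta>: "\<And>x y. \<theta> (x, y) = (\<Sum>i\<in>I. a i x * b i y)"
    using s unfolding separable_expansion_def by (auto intro: decaying_lipschitz_integrable)
  have slice: "decaying_lipschitz (\<lambda>y. \<theta> (x, y))" for x by (rule separable_expansion_slice[OF s])
  have \<theta>_int: "integrable lborel \<theta>" by (rule separable_expansion_integrable[OF s])
  note iterated = integral_pv_difference_trunc_iterated[OF \<theta>_int decaying_lipschitz_integrable[OF slice] e(1)]
  have S_int: "integrable lborel (S n)" for n
    using iterated(2) unfolding S_def .
  have e_right: "filterlim e (at_right 0) sequentially"
    using e by (intro tendsto_imp_filterlim_at_right) (auto intro: always_eventually)
  define f where "f x = complex_of_real (sin (x * K)) * (PV (\<lambda>y. \<theta> (x, y)) (- x) - PV (\<lambda>y. \<theta> (x, y)) x)"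
    for x
  have S_lim: "(\<lambda>n. S n x) \<longlonglongrightarrow> f x" for x
  proof -
    obtain L where "L-lipschitz_on UNIV (\<lambda>y. \<theta> (x, y))"
      using slice[of x] unfolding decaying_lipschitz_def by blast
    then have "(\<lambda>n. pv_truncated (\<lambda>y. \<theta> (x, y)) (e n) c) \<longlonglongrightarrow> PV (\<lambda>y. \<theta> (x, y)) c" for c
      by (intro filterlim_compose[OF tendsto_pv_truncated_PV e_right] decaying_lipschitz_integrable[OF slice])
    then show ?thesis unfolding S_def f_def by (intro tendsto_intros)
  qed
  have "\<forall>i\<in>I. \<exists>M. M-lipschitz_on UNIV (b i)"
    using b unfolding decaying_lipschitz_def by blast
  then obtain M where M: "\<And>i. i \<in> I \<Longrightarrow> (M i)-lipschitz_on UNIV (b i)"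
    by (auto dest!: bchoice)
  define B where "B i = 2 * M i + (LINT t|lborel. norm (b i t))" for i
  have bound: "norm (S n x) \<le> (\<Sum>i\<in>I. norm (a i x) * (2 * B i))" for n x
  proof -
    have "pv_truncated (\<lambda>y. \<theta> (x, y)) (e n) c = (\<Sum>i\<in>I. a i x * pv_truncated (b i) (e n) c)" for c
      unfolding \<theta> by (rule pv_truncated_sum[OF I decaying_lipschitz_integrable[OF b] e(1)])
    then have "S n x = complex_of_real (sin (x * K)) *
        (\<Sum>i\<in>I. a i x * (pv_truncated (b i) (e n) (- x) - pv_truncated (b i) (e n) x))"
      unfolding S_def by (simp add: sum_subtractf right_diff_distrib)
    also have "norm \<dots> \<le> 1 * (\<Sum>i\<in>I. norm (a i x) * (2 * B i))"
      unfolding norm_mult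
    proof (intro mult_mono order_trans[OF norm_sum] sum_mono)
      fix i assume i: "i \<in> I"
      have "norm (pv_truncated (b i) (e n) c) \<le> B i" for c
        unfolding B_def using decaying_lipschitz_integrable[OF b[OF i]] M[OF i] e(1)
        by (rule pv_truncated_bound)
      then have "norm (pv_truncated (b i) (e n) (- x) - pv_truncated (b i) (e n) x) \<le> B i + B i"
        by (intro order_trans[OF norm_triangle_ineq4 add_mono])
      then show "norm (a i x * (pv_truncated (b i) (e n) (- x) - pv_truncated (b i) (e n) x)) \<le> norm (a i x) * (2 * B i)"
        unfolding norm_mult by (intro mult_left_mono) simp_all
    qed (auto intro: sum_nonneg)
    finally show ?thesis by simp
  qed
  have "(\<lambda>n. integral\<^sup>L lborel (S n)) \<longlonglongrightarrow> integral\<^sup>L lborel f"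
  proof (rule integral_dominated_convergence[where w="\<lambda>x. \<Sum>i\<in>I. norm (a i x) * (2 * B i)"])
    show "f \<in> borel_measurable lborel"
      using S_int S_lim by (rule borel_measurable_LIMSEQ_metric[OF borel_measurable_integrable])
    show "integrable lborel (\<lambda>x. \<Sum>i\<in>I. norm (a i x) * (2 * B i))"
      using a by (intro Bochner_Integration.integrable_sum integrable_mult_left integrable_norm)
    show "S n \<in> borel_measurable lborel" for n
      using S_int[of n] by (rule borel_measurable_integrable)
    show "AE x in lborel. (\<lambda>n. S n x) \<longlonglongrightarrow> f x"
      by (intro AE_I2 S_lim)
    show "AE x in lborel. norm (S n x) \<le> (\<Sum>i\<in>I. norm (a i x) * (2 * B i))" for n
      by (intro AE_I2 bound)
  qed
  then show ?thesis unfolding iterated(1) S_def f_def .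
qed

lemma integral_pv_difference_trunc_add_swap:
  assumes \<theta>: "integrable lborel \<theta>" and e: "0 < e"
  shows "integral\<^sup>L lborel (pv_difference_trunc \<theta> K e) +
      integral\<^sup>L lborel (pv_difference_trunc (\<lambda>(x, y). \<theta> (y, x)) K e) =
    (LINT w|lborel. \<theta> w * complex_of_real (psi_kernel_trunc K e w))"
proof -
  let ?f = "pv_difference_trunc (\<lambda>(x, y). \<theta> (y, x)) K e"
  have "integrable (lborel \<Otimes>\<^sub>M lborel) (\<lambda>(x, y). \<theta> (y, x))"
    using lborel_pair.integrable_product_swap[of \<theta>] \<theta> by (simp add: lborel_prod)
  then have i: "integrable (lborel \<Otimes>\<^sub>M lborel) ?f"
    unfolding lborel_prod by (rule integrable_pv_difference_trunc[OF _ e])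
  have "integral\<^sup>L lborel ?f = (LINT w|lborel. (\<lambda>(x, y). ?f (y, x)) w)"
    using lborel_pair.integral_product_swap[OF borel_measurable_integrable[OF i]] by (simp add: lborel_prod)
  moreover have "integrable lborel (\<lambda>(x, y). ?f (y, x))"
    using lborel_pair.integrable_product_swap[OF i] by (simp add: lborel_prod)
  ultimately have "integral\<^sup>L lborel (pv_difference_trunc \<theta> K e) + integral\<^sup>L lborel ?f =
      (LINT w|lborel. pv_difference_trunc \<theta> K e w + (\<lambda>(x, y). ?f (y, x)) w)"
    using integrable_pv_difference_trunc[OF \<theta> e] by simp
  also have "\<dots> = (LINT w|lborel. \<theta> w * complex_of_real (psi_kernel_trunc K e w))"
    by (rule Bochner_Integration.integral_cong) (auto simp: pv_difference_trunc_add_swap)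
  finally show ?thesis .
qed

lemma pv_sides_sum_eq_integral_psi_kernel:
  assumes s: "separable_expansion I a b \<theta>" and K: "0 \<le> K"
  shows "(LINT x|lborel. complex_of_real (sin (x * K)) * (PV (\<lambda>y. \<theta> (x, y)) (- x) - PV (\<lambda>y. \<theta> (x, y)) x)) +
         (LINT y|lborel. complex_of_real (sin (y * K)) * (PV (\<lambda>x. \<theta> (x, y)) (- y) - PV (\<lambda>x. \<theta> (x, y)) y)) =
         (LINT w|lborel. \<theta> w * complex_of_real (psi_kernel K w))"
proof -
  define e where "e n = inverse (real (Suc n))" for n
  have e_pos: "0 < e n" for n unfolding e_def by simp
  have e_lim: "e \<longlonglongrightarrow> 0" unfolding e_def by (rule LIMSEQ_inverse_real_of_nat)
  have \<theta>: "integrable lborel \<theta>" by (rule separable_expansion_integrable[OF s])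
  have "(\<lambda>n. integral\<^sup>L lborel (pv_difference_trunc \<theta> K (e n)) +
      integral\<^sup>L lborel (pv_difference_trunc (\<lambda>(x, y). \<theta> (y, x)) K (e n))) \<longlonglongrightarrow>
    (LINT x|lborel. complex_of_real (sin (x * K)) * (PV (\<lambda>y. \<theta> (x, y)) (- x) - PV (\<lambda>y. \<theta> (x, y)) x)) +
    (LINT y|lborel. complex_of_real (sin (y * K)) * (PV (\<lambda>x. \<theta> (x, y)) (- y) - PV (\<lambda>x. \<theta> (x, y)) y))"
    using tendsto_integral_pv_difference_trunc[OF s e_pos e_lim]
      tendsto_integral_pv_difference_trunc[OF separable_expansion_swap[OF s] e_pos e_lim]
    by (intro tendsto_add) simp_all
  moreover have "(\<lambda>n. integral\<^sup>L lborel (pv_difference_trunc \<theta> K (e n)) +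
      integral\<^sup>L lborel (pv_difference_trunc (\<lambda>(x, y). \<theta> (y, x)) K (e n))) \<longlonglongrightarrow>
    (LINT w|lborel. \<theta> w * complex_of_real (psi_kernel K w))"
    unfolding integral_pv_difference_trunc_add_swap[OF \<theta> e_pos]
    by (rule tendsto_integral_psi_kernel_trunc[OF \<theta> K e_lim])
  ultimately show ?thesis by (rule LIMSEQ_unique)
qed

theorem mainTheorem18:
  fixes \<theta> :: "real \<times> real \<Rightarrow> complex" and k :: real
  assumes "\<theta> \<in> sep_even_schwartz"
  shows "Psi \<theta> 1 k + Psi \<theta> (-1) k =
    complex_of_real (1 / (2 * pi ^ 2)) *
      (LINT w1|lborel. complex_of_real (sin (w1 * \<bar>k\<bar>)) *
         (PV (\<lambda>w2. \<theta> (w1, w2)) (- w1) - PV (\<lambda>w2. \<theta> (w1, w2)) w1))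
  + complex_of_real (1 / (2 * pi ^ 2)) *
      (LINT w2|lborel. complex_of_real (sin (w2 * \<bar>k\<bar>)) *
         (PV (\<lambda>w1. \<theta> (w1, w2)) (- w2) - PV (\<lambda>w1. \<theta> (w1, w2)) w2))"
proof (cases "k = 0")
  case True
  then show ?thesis by (simp add: Psi_def set_lebesgue_integral_def)
next
  case False
  obtain a b :: "nat \<times> bool \<Rightarrow> real \<Rightarrow> complex" and I where s: "separable_expansion I a b \<theta>"
    using assms by (rule sep_even_schwartz_separable_expansion)
  have "Psi \<theta> 1 k + Psi \<theta> (-1) k =
      complex_of_real (1 / (2 * pi ^ 2)) * (LINT w|lborel. \<theta> w * complex_of_real (psi_kernel \<bar>k\<bar> w))"
    by (rule Psi_sum_eq_integral_psi_kernel[OF separable_expansion_integrable[OF s] False])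
  also note pv_sides_sum_eq_integral_psi_kernel[OF s abs_ge_zero, symmetric]
  finally show ?thesis by (simp add: distrib_left)
qed

end
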